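(* Let $p$ be a prime, $\varepsilon>0$, $0<\alpha\le1$, and let $N=p^{1/12-\varepsilon}$ (a positive integer). If $S$ is chosen from $\mathcal{S}(N,12)$, then with probability at least $1-6p^{-12\varepsilon}$, $$\mathcal{C}_\alpha(S)>\left(\alpha|S|/\sqrt[3]{4}\right)^{3/5}.$$
   Context: $\mathcal{S}(N,k)$ denotes the random subset $S=\{x_1,\dots,x_N\}\subseteq\mathbb{Z}_p$, where $x_1,\dots,x_N$ are $k$-wise independent random variables each uniformly distributed on $\mathbb{Z}_p$. For $L\subseteq\mathbb{Z}_p^2$, $I(L)=\{x\in\mathbb{Z}_p\mid \exists (a,b),(a',b')\in L,\ (a,b)\neq(a',b'),\ ax+b=a'x+b'\}$. For $S\subseteq\mathbb{Z}_p$ and $0<\alpha\leq1$, the generic $\alpha$-complexity $\mathcal{C}_\alpha(S)$ is the smallest cardinality of a set $L\subseteq\mathbb{Z}_p^2$ with $|S\cap I(L)|\geq\alpha|S|$. *)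

theory Defs
  imports "HOL-Probability.Probability"
begin

text \<open>Elements of Z_p are represented by naturals in {0..<p}; points of Z_p^2 by pairs.\<close>

definition I_lines :: "nat \<Rightarrow> (nat \<times> nat) set \<Rightarrow> nat set" where
  "I_lines p L = {x \<in> {0..<p}. \<exists>(a,b)\<in>L. \<exists>(a',b')\<in>L.
      (a,b) \<noteq> (a',b') \<and> (a*x+b) mod p = (a'*x+b') mod p}"

definition gen_complexity :: "nat \<Rightarrow> real \<Rightarrow> nat set \<Rightarrow> nat" where
  "gen_complexity p \<alpha> S = (LEAST n. \<exists>L. L \<subseteq> {0..<p} \<times> {0..<p} \<and> card L = n \<and>
      real (card (S \<inter> I_lines p L)) \<ge> \<alpha> * real (card S))"

text \<open>k-wise independent uniform random variables x_0..x_{N-1} on Z_p, given as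
  a joint distribution D on sequences (coordinate i is x_i).\<close>
definition kwise_uniform :: "nat \<Rightarrow> nat \<Rightarrow> nat \<Rightarrow> (nat \<Rightarrow> nat) pmf \<Rightarrow> bool" where
  "kwise_uniform p N k D \<longleftrightarrow>
     (\<forall>i<N. map_pmf (\<lambda>\<omega>. \<omega> i) D = pmf_of_set {0..<p}) \<and>
     (\<forall>J. J \<subseteq> {0..<N} \<and> card J \<le> k \<longrightarrow>
        prob_space.indep_vars (measure_pmf D) (\<lambda>_. count_space UNIV) (\<lambda>i \<omega>. \<omega> i) J)"

end

theory Submission
  imports Defs
begin

text \<open>Choose for every point \<open>x\<close> of \<open>T = S \<inter> I(L)\<close> one pair of lines of \<open>L\<close> meeting at \<open>x\<close>;
  since two lines meet at most once, this makes \<open>L\<close> the vertex set of a graph with \<open>|T|\<close> edges.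
  If four lines met the same three lines at points of \<open>S\<close>, eliminating the four lines from the
  twelve incidences would leave a kernel vector, nonzero mod \<open>p\<close>, of a \<open>4 \<times> 4\<close> matrix in the twelve
  meeting points, so its determinant would vanish mod \<open>p\<close>. That determinant is affine in four
  successive coordinates with a non-vanishing leading coefficient, so it has at most \<open>4 p^11\<close> zeros
  among the \<open>p^12\<close> tuples; by 12-wise independence each injective index tuple hits a zero with
  probability at most \<open>4 / p\<close>, and a union bound over at most \<open>N^12\<close> tuples bounds the failure
  probability by \<open>4 N^12 / p = 4 p^(-12 \<epsilon>)\<close>. Otherwise the graph contains no complete bipartite
  graph \<open>K(3, 4)\<close>, and counting stars with three edges as in the Kovari-Sos-Turan theorem gives
  \<open>|T|^3 < 4 |L|^5\<close>.\<close>

section \<open>Few common neighbours force few edges\<close>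

lemma six_mult_choose_three: "6 * (d choose 3) = d * (d - 1) * (d - 2)"
proof (cases "d \<ge> 3")
  case True
  then obtain m where d: "d = m + 3" by (metis le_add_diff_inverse2)
  have "fact 3 * fact m * (d choose 3) = fact d"
    using binomial_fact_lemma[of 3 d] True by (simp add: d mult_ac)
  also have "fact d = d * (d - 1) * (d - 2) * (fact m :: nat)"
    by (simp add: d numeral_3_eq_3 algebra_simps)
  finally show ?thesis by (simp add: fact_numeral)
next
  case False
  then have "d = 0 \<or> d = 1 \<or> d = 2" by auto
  then show ?thesis by auto
qed

lemma cube_le_six_mult_choose_three: "(max (real d - 2) 0) ^ 3 \<le> 6 * real (d choose 3)"
proof (cases "d \<ge> 2")
  case True
  have "(real d - 2) ^ 3 = (real d - 2)\<^sup>2 * (real d - 2)"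
    by (simp add: power2_eq_square power3_eq_cube)
  also have "\<dots> \<le> (real d * (real d - 1)) * (real d - 2)"
    using True by (intro mult_right_mono) (auto simp: power2_eq_square algebra_simps)
  also have "\<dots> = 6 * real (d choose 3)"
    using True arg_cong[OF six_mult_choose_three, of real] by (simp add: of_nat_diff)
  finally show ?thesis using True by simp
qed simp

lemma sum_power3_le_card_power2_mult:
  fixes y :: "'a \<Rightarrow> real"
  assumes "finite V" "V \<noteq> {}" and nonneg: "\<And>v. v \<in> V \<Longrightarrow> y v \<ge> 0"
  shows "(\<Sum>v\<in>V. y v) ^ 3 \<le> real (card V) ^ 2 * (\<Sum>v\<in>V. y v ^ 3)"
proof -
  define n where "n = real (card V)"
  define S where "S = (\<Sum>v\<in>V. y v)"
  define c where "c = S / n"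
  have n: "n > 0" using assms(1,2) by (simp add: n_def card_gt_0_iff)
  have "c \<ge> 0" using n nonneg by (simp add: c_def S_def sum_nonneg)
  \<comment> \<open>tangent line of the convex function \<open>t\<^sup>3\<close> at the mean \<open>c\<close>\<close>
  then have tangent: "3 * c\<^sup>2 * y v - 2 * c ^ 3 \<le> y v ^ 3" if "v \<in> V" for v
  proof -
    have "0 \<le> (y v - c)\<^sup>2 * (y v + 2 * c)" using nonneg[OF that] \<open>c \<ge> 0\<close> by simp
    then show ?thesis by (simp add: algebra_simps power2_eq_square power3_eq_cube)
  qed
  have "S ^ 3 / n\<^sup>2 = 3 * c\<^sup>2 * S - 2 * c ^ 3 * n"
    using n by (simp add: c_def field_simps power2_eq_square power3_eq_cube)
  also have "\<dots> = (\<Sum>v\<in>V. 3 * c\<^sup>2 * y v - 2 * c ^ 3)"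
    by (simp add: sum_subtractf sum_distrib_left S_def n_def)
  also have "\<dots> \<le> (\<Sum>v\<in>V. y v ^ 3)" by (rule sum_mono) (rule tangent)
  finally show ?thesis using n by (simp add: S_def n_def field_simps)
qed

lemma sum_choose_three_neighbours_le:
  fixes R :: "('a \<times> 'a) set"
  assumes "finite V" "R \<subseteq> V \<times> V"
    and few_common: "\<And>A. A \<subseteq> V \<Longrightarrow> card A = 3 \<Longrightarrow> card {v \<in> V. {v} \<times> A \<subseteq> R} \<le> 3"
  shows "(\<Sum>v\<in>V. card (R `` {v}) choose 3) \<le> 3 * (card V choose 3)"
proof -
  define Triples where "Triples = {A. A \<subseteq> V \<and> card A = 3}"
  have fin: "finite Triples" using \<open>finite V\<close> by (simp add: Triples_def)
  have "(\<Sum>v\<in>V. card (R `` {v}) choose 3) = (\<Sum>v\<in>V. card {A \<in> Triples. {v} \<times> A \<subseteq> R})"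
  proof (rule sum.cong)
    fix v assume "v \<in> V"
    have "{A \<in> Triples. {v} \<times> A \<subseteq> R} = {A. A \<subseteq> R `` {v} \<and> card A = 3}"
      using assms(2) by (auto simp: Triples_def)
    then show "card (R `` {v}) choose 3 = card {A \<in> Triples. {v} \<times> A \<subseteq> R}"
      using finite_subset[OF Image_mono[OF assms(2) subset_refl]] \<open>finite V\<close>
      by (simp add: n_subsets)
  qed simp
  also have "\<dots> = (\<Sum>v\<in>V. \<Sum>A\<in>Triples. of_bool ({v} \<times> A \<subseteq> R))"
    using fin by (simp add: Int_def conj_commute)
  also have "\<dots> = (\<Sum>A\<in>Triples. \<Sum>v\<in>V. of_bool ({v} \<times> A \<subseteq> R))"
    by (rule sum.swap)
  also have "\<dots> = (\<Sum>A\<in>Triples. card {v \<in> V. {v} \<times> A \<subseteq> R})"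
    using \<open>finite V\<close> by (simp add: Int_def conj_commute)
  also have "\<dots> \<le> (\<Sum>A\<in>Triples. 3)"
    by (rule sum_mono) (simp add: Triples_def few_common)
  also have "\<dots> = 3 * (card V choose 3)"
    using \<open>finite V\<close> by (simp add: Triples_def n_subsets)
  finally show ?thesis .
qed

lemma sum_excess_cube_le:
  fixes d :: "'a \<Rightarrow> nat"
  assumes "finite V" "V \<noteq> {}" "2 * card V \<le> (\<Sum>v\<in>V. d v)"
    and few_cherries: "(\<Sum>v\<in>V. d v choose 3) \<le> 3 * (card V choose 3)"
  shows "(real (\<Sum>v\<in>V. d v) - 2 * real (card V)) ^ 3 \<le> 3 * real (card V) ^ 5"
proof -
  define n where "n = real (card V)"
  define y where "y v = max (real (d v) - 2) 0" for v
  have "0 \<le> real (\<Sum>v\<in>V. d v) - 2 * n" using assms(3) by (simp add: n_def flip: of_nat_sum)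
  moreover have "real (\<Sum>v\<in>V. d v) - 2 * n \<le> (\<Sum>v\<in>V. y v)"
    using sum_mono[of V "\<lambda>v. real (d v) - 2" y] by (simp add: y_def sum_subtractf n_def)
  ultimately have "(real (\<Sum>v\<in>V. d v) - 2 * n) ^ 3 \<le> (\<Sum>v\<in>V. y v) ^ 3"
    by (intro power_mono)
  also have "\<dots> \<le> n\<^sup>2 * (\<Sum>v\<in>V. y v ^ 3)"
    using assms(1,2) by (auto simp: n_def y_def intro!: sum_power3_le_card_power2_mult)
  also have "(\<Sum>v\<in>V. y v ^ 3) \<le> 6 * real (\<Sum>v\<in>V. d v choose 3)"
    by (simp add: sum_distrib_left y_def sum_mono cube_le_six_mult_choose_three)
  also have "\<dots> \<le> 18 * real (card V choose 3)"
    using few_cherries by (simp flip: of_nat_sum of_nat_le_iff)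
  also have "\<dots> \<le> 3 * n ^ 3"
  proof -
    have "6 * (card V choose 3) \<le> card V ^ 3"
      using binomial_fact_pow[of "card V" 3] by (simp add: fact_numeral mult.commute)
    then have "6 * real (card V choose 3) \<le> n ^ 3"
      unfolding n_def by (metis of_nat_le_iff of_nat_mult of_nat_numeral of_nat_power)
    then show ?thesis by simp
  qed
  finally show ?thesis
    by (simp add: n_def mult_left_mono power2_eq_square power3_eq_cube numeral_eq_Suc)
qed

lemma sum_cube_less_of_few_cherries:
  fixes d :: "'a \<Rightarrow> nat"
  assumes "finite V" "card V \<ge> 2"
    and few_cherries: "(\<Sum>v\<in>V. d v choose 3) \<le> 3 * (card V choose 3)"
  shows "real (\<Sum>v\<in>V. d v) ^ 3 < 32 * real (card V) ^ 5"
proof -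
  define n where "n = real (card V)"
  define r where "r = real (\<Sum>v\<in>V. d v)"
  have n: "n \<ge> 2" using assms(2) by (simp add: n_def)
  have "0 \<le> r" by (simp add: r_def sum_nonneg)
  show ?thesis
  proof (cases "r < 4 * n")
    case True
    then have "r ^ 3 < (4 * n) ^ 3" using \<open>0 \<le> r\<close> by (intro power_strict_mono) auto
    also have "\<dots> \<le> 32 * n ^ 5"
      using n mult_mono[OF n n] by (simp add: power_mult_distrib power2_eq_square power3_eq_cube
          numeral_eq_Suc)
    finally show ?thesis by (simp add: r_def n_def)
  next
    case False
    then have "(r / 2) ^ 3 \<le> (r - 2 * n) ^ 3" using n by (intro power_mono) auto
    also have "\<dots> \<le> 3 * n ^ 5"
    proof -
      have "real (2 * card V) \<le> r" using False n by (simp add: n_def)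
      then have "2 * card V \<le> (\<Sum>v\<in>V. d v)" unfolding r_def of_nat_le_iff .
      moreover have "V \<noteq> {}" using assms(2) by auto
      ultimately show ?thesis
        using sum_excess_cube_le[OF assms(1) _ _ few_cherries] by (simp add: r_def n_def)
    qed
    finally have "r ^ 3 \<le> 24 * n ^ 5" by (simp add: power_divide)
    moreover have "0 < n ^ 5" using n by simp
    ultimately have "r ^ 3 < 32 * n ^ 5" by linarith
    then show ?thesis by (simp add: r_def n_def)
  qed
qed

lemma card_cube_less_of_few_common_neighbours:
  fixes R :: "('a \<times> 'a) set"
  assumes "finite V" "R \<subseteq> V \<times> V" "card V \<ge> 2"
    and "\<And>A. A \<subseteq> V \<Longrightarrow> card A = 3 \<Longrightarrow> card {v \<in> V. {v} \<times> A \<subseteq> R} \<le> 3"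
  shows "real (card R) ^ 3 < 32 * real (card V) ^ 5"
proof -
  have "R = Sigma V (\<lambda>v. R `` {v})" using assms(2) by auto
  then have "card R = (\<Sum>v\<in>V. card (R `` {v}))"
    using assms(1,2) by (metis card_SigmaI finite_SigmaI finite_subset finite_Image)
  then show ?thesis
    using sum_cube_less_of_few_cherries[OF assms(1,3)]
      sum_choose_three_neighbours_le[OF assms(1,2,4)]
    by simp
qed

lemma card_image_Un_swap_image:
  fixes e :: "'a \<Rightarrow> 'b \<times> 'b"
  assumes "finite T" "\<And>x. x \<in> T \<Longrightarrow> fst (e x) \<noteq> snd (e x)"
    and same: "\<And>x x'. x \<in> T \<Longrightarrow> x' \<in> T \<Longrightarrow> e x' = e x \<or> e x' = prod.swap (e x) \<Longrightarrow> x = x'"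
  shows "card (e ` T \<union> prod.swap ` e ` T) = 2 * card T"
proof -
  have "inj_on e T" using same by (auto intro!: inj_onI)
  moreover have "e x' \<noteq> prod.swap (e x)" if "x \<in> T" "x' \<in> T" for x x'
  proof
    assume swapped: "e x' = prod.swap (e x)"
    then have "x = x'" using same[OF that] by blast
    then have "fst (e x) = snd (e x)" using swapped by (metis fst_swap)
    then show False using assms(2)[OF that(1)] by simp
  qed
  then have "e ` T \<inter> prod.swap ` e ` T = {}" by blast
  ultimately show ?thesis using assms(1) by (simp add: card_Un_disjoint card_image)
qed

section \<open>Lines over \<open>\<int>\<^sub>p\<close>\<close>

lemma eq_of_dvd_diff_less:
  assumes "a < p" "b < p" "int p dvd int a - int b"
  shows "a = b"
proof (rule ccontr)
  assume "a \<noteq> b"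
  then have "\<bar>int p\<bar> \<le> \<bar>int a - int b\<bar>" using assms(3) by (intro dvd_imp_le_int) auto
  then show False using assms(1,2) by linarith
qed

definition line_value :: "nat \<Rightarrow> nat \<times> nat \<Rightarrow> nat \<Rightarrow> nat" where
  "line_value p l x = (fst l * x + snd l) mod p"

lemma mem_I_lines_iff:
  "x \<in> I_lines p L \<longleftrightarrow> x < p \<and> (\<exists>l\<in>L. \<exists>l'\<in>L. l \<noteq> l' \<and> line_value p l x = line_value p l' x)"
  by (force simp: I_lines_def line_value_def)

lemma line_value_eq_iff_dvd:
  "line_value p l x = line_value p l' x \<longleftrightarrow>
     int p dvd (int (fst l) * int x + int (snd l)) - (int (fst l') * int x + int (snd l'))"
proof -
  have "line_value p l x = line_value p l' x \<longleftrightarrow>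
      int (fst l * x + snd l) mod int p = int (fst l' * x + snd l') mod int p"
    unfolding line_value_def by (metis of_nat_eq_iff zmod_int)
  then show ?thesis by (simp add: mod_eq_dvd_iff)
qed

lemma lines_meet_at_most_once:
  assumes "prime p" and "l \<in> {0..<p} \<times> {0..<p}" "l' \<in> {0..<p} \<times> {0..<p}" "l \<noteq> l'"
    and "x < p" "x' < p"
    and "line_value p l x = line_value p l' x" "line_value p l x' = line_value p l' x'"
  shows "x = x'"
proof -
  define da db where "da = int (fst l) - int (fst l')" and "db = int (snd l) - int (snd l')"
  have meet: "int p dvd da * int x + db" "int p dvd da * int x' + db"
    using assms(7,8) unfolding line_value_eq_iff_dvd da_def db_def by (simp_all add: algebra_simps)
  have "int p dvd da * (int x - int x')"
    using dvd_diff[OF meet] by (simp add: algebra_simps)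
  then have "int p dvd da \<or> int p dvd int x - int x'"
    using \<open>prime p\<close> by (simp add: prime_dvd_mult_iff)
  then show ?thesis
  proof
    assume "int p dvd da"
    then have "fst l = fst l'" using assms(2,3) eq_of_dvd_diff_less by (auto simp: da_def)
    moreover have "snd l = snd l'"
      using meet(1) \<open>int p dvd da\<close> assms(2,3) eq_of_dvd_diff_less
      by (auto simp: db_def dvd_add_right_iff)
    ultimately show ?thesis using \<open>l \<noteq> l'\<close> by (simp add: prod_eq_iff)
  qed (use assms(5,6) eq_of_dvd_diff_less in blast)
qed

lemma I_lines_grid:
  assumes "1 < p"
  shows "I_lines p ({0..<p} \<times> {0..<p}) = {0..<p}"
proof -
  have "x \<in> I_lines p ({0..<p} \<times> {0..<p})" if "x < p" for x
  proof -
    \<comment> \<open>the lines \<open>y = 0\<close> and \<open>y = t - x\<close> meet at \<open>t = x\<close>\<close>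
    have "line_value p (1, (p - x) mod p) x = line_value p (0, 0) x"
      using that by (cases "x = 0") (simp_all add: line_value_def)
    moreover have "(1, (p - x) mod p) \<in> {0..<p} \<times> {0..<p}" "(0, 0) \<in> {0..<p} \<times> {0..<p}"
      using assms by auto
    ultimately show ?thesis
      using that unfolding mem_I_lines_iff by (metis old.prod.inject zero_neq_one)
  qed
  then show ?thesis by (auto simp: I_lines_def)
qed

lemma obtain_meeting_pairs:
  assumes "T \<subseteq> I_lines p L"
  obtains ends :: "nat \<Rightarrow> (nat \<times> nat) \<times> (nat \<times> nat)"
  where "\<And>x. x \<in> T \<Longrightarrow> fst (ends x) \<in> L \<and> snd (ends x) \<in> L \<and> fst (ends x) \<noteq> snd (ends x)
      \<and> line_value p (fst (ends x)) x = line_value p (snd (ends x)) x"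
proof -
  have "\<exists>e. fst e \<in> L \<and> snd e \<in> L \<and> fst e \<noteq> snd e \<and> line_value p (fst e) x = line_value p (snd e) x"
    if "x \<in> T" for x
  proof -
    have "x \<in> I_lines p L" using that assms by blast
    then obtain l l' where "l \<in> L" "l' \<in> L" "l \<noteq> l'" "line_value p l x = line_value p l' x"
      unfolding mem_I_lines_iff by blast
    then show ?thesis by (intro exI[of _ "(l, l')"]) simp
  qed
  then show thesis using that by metis
qed

section \<open>Determinants of \<open>4 \<times> 4\<close> integer matrices\<close>

text \<open>Rows of \<open>4 \<times> 4\<close> integer matrices are functions \<open>nat \<Rightarrow> int\<close>, of which only the entries
  \<open>0..3\<close> matter.\<close>

definition det3 :: "(nat \<Rightarrow> int) \<Rightarrow> (nat \<Rightarrow> int) \<Rightarrow> (nat \<Rightarrow> int) \<Rightarrow> nat \<Rightarrow> nat \<Rightarrow> nat \<Rightarrow> int" where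
  "det3 a b c i j k =
     a i * (b j * c k - b k * c j) - a j * (b i * c k - b k * c i) + a k * (b i * c j - b j * c i)"

definition det4 :: "(nat \<Rightarrow> int) \<Rightarrow> (nat \<Rightarrow> int) \<Rightarrow> (nat \<Rightarrow> int) \<Rightarrow> (nat \<Rightarrow> int) \<Rightarrow> int" where
  "det4 r0 r1 r2 r3 = r0 0 * det3 r1 r2 r3 1 2 3 - r0 1 * det3 r1 r2 r3 0 2 3
     + r0 2 * det3 r1 r2 r3 0 1 3 - r0 3 * det3 r1 r2 r3 0 1 2"

definition dot4 :: "(nat \<Rightarrow> int) \<Rightarrow> (nat \<Rightarrow> int) \<Rightarrow> int" where
  "dot4 r w = r 0 * w 0 + r 1 * w 1 + r 2 * w 2 + r 3 * w 3"

lemma det4_affine_row: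
  "det4 (\<lambda>k. z * e k + f k) r1 r2 r3 = z * det4 e r1 r2 r3 + det4 f r1 r2 r3"
  "det4 r0 (\<lambda>k. z * e k + f k) r2 r3 = z * det4 r0 e r2 r3 + det4 r0 f r2 r3"
  "det4 r0 r1 (\<lambda>k. z * e k + f k) r3 = z * det4 r0 r1 e r3 + det4 r0 r1 f r3"
  "det4 r0 r1 r2 (\<lambda>k. z * e k + f k) = z * det4 r0 r1 r2 e + det4 r0 r1 r2 f"
  unfolding det4_def det3_def by (simp_all add: algebra_simps)

lemma det4_scale_column:
  assumes "i < 4"
  shows "det4 (r0(i := c * r0 i)) (r1(i := c * r1 i)) (r2(i := c * r2 i)) (r3(i := c * r3 i))
    = c * det4 r0 r1 r2 r3"
  using assms unfolding det4_def det3_def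
  by (auto simp: algebra_simps less_Suc_eq numeral_eq_Suc)

lemma det4_cramer:
  assumes "i < 4"
  shows "det4 (r0(i := dot4 r0 w)) (r1(i := dot4 r1 w)) (r2(i := dot4 r2 w)) (r3(i := dot4 r3 w))
    = w i * det4 r0 r1 r2 r3"
  using assms unfolding det4_def det3_def dot4_def
  by (auto simp: algebra_simps less_Suc_eq numeral_eq_Suc)

lemma det4_dvd_of_column_dvd:
  fixes p :: int
  assumes "i < 4" "p dvd r0 i" "p dvd r1 i" "p dvd r2 i" "p dvd r3 i"
  shows "p dvd det4 r0 r1 r2 r3"
proof -
  obtain q0 q1 q2 q3 where q: "r0 i = p * q0" "r1 i = p * q1" "r2 i = p * q2" "r3 i = p * q3"
    using assms(2-5) by (meson dvdE)
  have "r = (r(i := q))(i := p * (r(i := q)) i)" if "r i = p * q" for r :: "nat \<Rightarrow> int" and q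
    using that by auto
  then have "det4 r0 r1 r2 r3 = p * det4 (r0(i := q0)) (r1(i := q1)) (r2(i := q2)) (r3(i := q3))"
    using q det4_scale_column[OF assms(1), where c = p] by metis
  then show ?thesis by simp
qed

lemma det4_dvd_of_kernel:
  fixes p :: int
  assumes "prime p" "i < 4" "\<not> p dvd w i"
    and "p dvd dot4 r0 w" "p dvd dot4 r1 w" "p dvd dot4 r2 w" "p dvd dot4 r3 w"
  shows "p dvd det4 r0 r1 r2 r3"
proof -
  have "p dvd w i * det4 r0 r1 r2 r3"
    unfolding det4_cramer[OF assms(2), symmetric]
    by (rule det4_dvd_of_column_dvd[OF assms(2)]) (simp_all add: assms(4-7))
  then show ?thesis using assms(1,3) by (simp add: prime_dvd_mult_iff)
qed

section \<open>Bad tuples\<close>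

definition config_row :: "int \<Rightarrow> int \<Rightarrow> int \<Rightarrow> nat \<Rightarrow> int" where
  "config_row s t z = (\<lambda>k.
     if k = 0 then s * (t - z) else if k = 1 then t - z else if k = 2 then t * (z - s) else z - s)"

text \<open>If a line \<open>(C, D)\<close> meets the lines \<open>(A1, B1)\<close>, \<open>(A2, B2)\<close>, \<open>(A3, B3)\<close> at \<open>s\<close>, \<open>t\<close>, \<open>z\<close>,
  the right-hand side vanishes modulo \<open>p\<close>; since \<open>C\<close> and \<open>D\<close> cancel, the row \<open>config_row s t z\<close>
  is then orthogonal to a vector determined by the three fixed lines alone.\<close>

lemma dot4_config_row:
  "dot4 (config_row s t z)
      (\<lambda>k. if k = 0 then A1 - A3 else if k = 1 then B1 - B3 else if k = 2 then A2 - A3 else B2 - B3)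
   = (t - z) * (A1 * s + B1 - (C * s + D)) - (s - z) * (A2 * t + B2 - (C * t + D))
     - (t - s) * (A3 * z + B3 - (C * z + D))"
  by (simp add: dot4_def config_row_def algebra_simps)

text \<open>The entries \<open>y j\<close>, \<open>y (j + 4)\<close>, \<open>y (j + 8)\<close> of a tuple \<open>y\<close> stand for the points where the
  \<open>j\<close>-th of four lines meets three fixed lines.\<close>

definition tuple_row :: "(nat \<Rightarrow> nat) \<Rightarrow> nat \<Rightarrow> nat \<Rightarrow> int" where
  "tuple_row y j = config_row (int (y j)) (int (y (j + 4))) (int (y (j + 8)))"

definition config_det :: "(nat \<Rightarrow> nat) \<Rightarrow> int" where
  "config_det y = det4 (tuple_row y 0) (tuple_row y 1) (tuple_row y 2) (tuple_row y 3)"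

text \<open>The side conditions exclude the zeros of the leading coefficient \<open>(y 0 - y 4) (y 1 - y 2)\<close>
  of \<open>config_det\<close> as a polynomial in \<open>y 11\<close>, \<open>y 10\<close>, \<open>y 9\<close>, \<open>y 7\<close>; for tuples of distinct points
  they hold anyway.\<close>

definition bad_tuple :: "nat \<Rightarrow> (nat \<Rightarrow> nat) \<Rightarrow> bool" where
  "bad_tuple p y \<longleftrightarrow> y 0 \<noteq> y 4 \<and> y 1 \<noteq> y 2 \<and> int p dvd config_det y"

definition bad_tuple_free :: "nat \<Rightarrow> nat set \<Rightarrow> bool" where
  "bad_tuple_free p S \<longleftrightarrow> (\<forall>y. inj_on y {0..<12} \<and> y ` {0..<12} \<subseteq> S \<longrightarrow> \<not> bad_tuple p y)"

lemma bad_tuple_cong: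
  assumes "\<And>i. i < 12 \<Longrightarrow> y i = y' i"
  shows "bad_tuple p y = bad_tuple p y'"
  using assms by (simp add: bad_tuple_def config_det_def tuple_row_def)

lemma bad_tuple_of_lines_meet:
  assumes "prime p" and grid: "a \<in> {0..<p} \<times> {0..<p}" "c \<in> {0..<p} \<times> {0..<p}" and "a \<noteq> c"
    and meet_a: "\<And>j. j < 4 \<Longrightarrow> line_value p a (y j) = line_value p (v j) (y j)"
    and meet_b: "\<And>j. j < 4 \<Longrightarrow> line_value p b (y (j + 4)) = line_value p (v j) (y (j + 4))"
    and meet_c: "\<And>j. j < 4 \<Longrightarrow> line_value p c (y (j + 8)) = line_value p (v j) (y (j + 8))"
    and "y 0 \<noteq> y 4" "y 1 \<noteq> y 2"
  shows "bad_tuple p y"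
proof -
  define w :: "nat \<Rightarrow> int" where
    "w = (\<lambda>k. if k = 0 then int (fst a) - int (fst c) else if k = 1 then int (snd a) - int (snd c)
       else if k = 2 then int (fst b) - int (fst c) else int (snd b) - int (snd c))"
  have kernel: "int p dvd dot4 (tuple_row y j) w" if "j < 4" for j
    unfolding tuple_row_def w_def
      dot4_config_row[where C = "int (fst (v j))" and D = "int (snd (v j))"]
    using meet_a[OF that] meet_b[OF that] meet_c[OF that] unfolding line_value_eq_iff_dvd
    by (blast intro: dvd_diff dvd_mult)
  have "\<not> (int p dvd w 0 \<and> int p dvd w 1)"
  proof
    assume "int p dvd w 0 \<and> int p dvd w 1"
    then have "fst a = fst c" "snd a = snd c" using grid eq_of_dvd_diff_less by (auto simp: w_def)
    then show False using \<open>a \<noteq> c\<close> by (simp add: prod_eq_iff)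
  qed
  moreover have "(0::nat) < 4" "(1::nat) < 4" by simp_all
  ultimately obtain i :: nat where i: "i < 4" "\<not> int p dvd w i" by blast
  have "int p dvd config_det y"
    unfolding config_det_def
    by (rule det4_dvd_of_kernel[OF _ i kernel kernel kernel kernel]) (simp_all add: \<open>prime p\<close>)
  then show ?thesis using assms(8,9) by (simp add: bad_tuple_def)
qed

lemma bad_tuple_of_meeting_points:
  assumes "prime p" "a \<in> {0..<p} \<times> {0..<p}" "c \<in> {0..<p} \<times> {0..<p}" "a \<noteq> c"
    and pt_inj: "\<And>j q j' q'. pt j q = pt j' q' \<Longrightarrow> j < 4 \<Longrightarrow> q < 3 \<Longrightarrow> j' < 4 \<Longrightarrow> q' < 3
      \<Longrightarrow> j = j' \<and> q = q'"
    and meet: "\<And>j q. j < 4 \<Longrightarrow> q < 3 \<Longrightarrow>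
      line_value p ([a, b, c] ! q) (pt j q) = line_value p (v j) (pt j q)"
  shows "inj_on (\<lambda>i. pt (i mod 4) (i div 4)) {0..<12} \<and> bad_tuple p (\<lambda>i. pt (i mod 4) (i div 4))"
proof
  let ?y = "\<lambda>i. pt (i mod 4) (i div 4)"
  show y_inj: "inj_on ?y {0..<12}"
  proof (rule inj_onI)
    fix i i' assume "i \<in> {0..<12}" "i' \<in> {0..<12}" "?y i = ?y i'"
    then have "i mod 4 = i' mod 4 \<and> i div 4 = i' div 4" by (intro pt_inj) auto
    then show "i = i'" by (metis div_mult_mod_eq)
  qed
  show "bad_tuple p ?y"
  proof (rule bad_tuple_of_lines_meet[OF assms(1-4), where v = v])
    show "?y 0 \<noteq> ?y 4" "?y 1 \<noteq> ?y 2" using pt_inj[of 0 0 0 1] pt_inj[of 1 0 2 0] by auto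
    fix j :: nat assume "j < 4"
    then have "(j + 4) mod 4 = j" "(j + 4) div 4 = 1" "(j + 8) mod 4 = j" "(j + 8) div 4 = 2"
      by presburger+
    with \<open>j < 4\<close> show "line_value p a (?y j) = line_value p (v j) (?y j)"
      and "line_value p b (?y (j + 4)) = line_value p (v j) (?y (j + 4))"
      and "line_value p c (?y (j + 8)) = line_value p (v j) (?y (j + 8))"
      using meet[of j 0] meet[of j 1] meet[of j 2] by simp_all
  qed
qed

lemma card_affine_zeros_le:
  fixes G H :: "(nat \<Rightarrow> nat) \<Rightarrow> int"
  assumes "prime p" "finite I" "c \<in> I"
    and "\<And>y v. G (y(c := v)) = G y" "\<And>y v. H (y(c := v)) = H y"
  shows "card {y \<in> PiE I (\<lambda>_. {0..<p}). \<not> int p dvd G y \<and> int p dvd int (y c) * G y + H y}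
    \<le> p ^ (card I - 1)"
proof -
  define Z where "Z = {y \<in> PiE I (\<lambda>_. {0..<p}). \<not> int p dvd G y \<and> int p dvd int (y c) * G y + H y}"
  define forget where "forget y = y(c := undefined)" for y :: "nat \<Rightarrow> nat"
  have "inj_on forget Z"
  proof (rule inj_onI)
    fix y y' assume y: "y \<in> Z" and y': "y' \<in> Z" and "forget y = forget y'"
    then have y'_eq: "y' = y(c := y' c)" unfolding forget_def by (metis fun_upd_triv fun_upd_upd)
    then have "G y' = G y" "H y' = H y" using assms(4,5) by metis+
    then have "int p dvd (int (y c) - int (y' c)) * G y"
      using dvd_diff[of "int p" "int (y c) * G y + H y" "int (y' c) * G y' + H y'"] y y'
      by (simp add: Z_def algebra_simps)
    then have "int p dvd int (y c) - int (y' c)"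
      using y \<open>prime p\<close> by (simp add: Z_def prime_dvd_mult_iff)
    moreover have "y c < p" "y' c < p" using y y' \<open>c \<in> I\<close> by (auto simp: Z_def PiE_iff)
    ultimately have "y c = y' c" by (metis eq_of_dvd_diff_less)
    then show "y = y'" using y'_eq by (metis fun_upd_triv)
  qed
  moreover have "forget ` Z \<subseteq> PiE (I - {c}) (\<lambda>_. {0..<p})"
    by (auto simp: Z_def forget_def PiE_def Pi_def extensional_def)
  ultimately have "card Z \<le> card (PiE (I - {c}) (\<lambda>_. {0..<p}))"
    by (metis card_inj_on_le finite_PiE finite_atLeastLessThan \<open>finite I\<close> finite_Diff)
  also have "\<dots> = p ^ (card I - 1)"
    using assms(2,3) by (simp add: card_PiE)
  finally show ?thesis by (simp add: Z_def)
qed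

definition tuple_row_slope :: "(nat \<Rightarrow> nat) \<Rightarrow> nat \<Rightarrow> nat \<Rightarrow> int" where
  "tuple_row_slope y j = (\<lambda>k.
     if k = 0 then - int (y j) else if k = 1 then - 1 else if k = 2 then int (y (j + 4)) else 1)"

definition tuple_row_offset :: "(nat \<Rightarrow> nat) \<Rightarrow> nat \<Rightarrow> nat \<Rightarrow> int" where
  "tuple_row_offset y j =
     (\<lambda>k. if k = 0 then int (y j) * int (y (j + 4)) else if k = 1 then int (y (j + 4))
       else if k = 2 then - (int (y (j + 4)) * int (y j)) else - int (y j))"

lemma tuple_row_affine:
  "tuple_row y j = (\<lambda>k. int (y (j + 8)) * tuple_row_slope y j k + tuple_row_offset y j k)"
  by (auto simp: tuple_row_def config_row_def tuple_row_slope_def tuple_row_offset_def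
      algebra_simps)

lemma card_bad_tuples_le:
  assumes "prime p"
  shows "card {y \<in> PiE {0..<12} (\<lambda>_. {0..<p}). bad_tuple p y} \<le> 4 * p ^ 11"
proof -
  let ?P = "PiE {0..<12} (\<lambda>_. {0..<p})"
  define zeros where "zeros c G H = {y \<in> ?P. \<not> int p dvd G y \<and> int p dvd int (y c) * G y + H y}"
    for c and G H :: "(nat \<Rightarrow> nat) \<Rightarrow> int"
  let ?R = "tuple_row" and ?S = "tuple_row_slope" and ?O = "tuple_row_offset"
  define G1 where "G1 y = det4 (?R y 0) (?R y 1) (?R y 2) (?S y 3)" for y
  define H1 where "H1 y = det4 (?R y 0) (?R y 1) (?R y 2) (?O y 3)" for y
  define G2 where "G2 y = det4 (?R y 0) (?R y 1) (?S y 2) (?S y 3)" for y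
  define H2 where "H2 y = det4 (?R y 0) (?R y 1) (?O y 2) (?S y 3)" for y
  define G3 where "G3 y = det4 (?R y 0) (?S y 1) (?S y 2) (?S y 3)" for y
  define H3 where "H3 y = det4 (?R y 0) (?O y 1) (?S y 2) (?S y 3)" for y
  define G4 where "G4 y = int (y 1) - int (y 2)" for y :: "nat \<Rightarrow> nat"
  define H4 where "H4 y = int (y 3) * int (y 6) - int (y 1) * int (y 6)
    + int (y 5) * int (y 2) - int (y 5) * int (y 3)" for y :: "nat \<Rightarrow> nat"
  \<comment> \<open>expanding along \<open>y 11\<close>, \<open>y 10\<close>, \<open>y 9\<close>, \<open>y 7\<close> in turn: a bad tuple makes some coefficient \<open>G\<close>
    a unit mod \<open>p\<close> and its variable a root of the corresponding affine form\<close>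
  have expand: "config_det y = int (y 11) * G1 y + H1 y" "G1 y = int (y 10) * G2 y + H2 y"
      "G2 y = int (y 9) * G3 y + H3 y" "G3 y = (int (y 0) - int (y 4)) * (int (y 7) * G4 y + H4 y)"
    for y
    unfolding config_det_def G1_def H1_def G2_def H2_def G3_def H3_def
    by (simp_all only: tuple_row_affine[of y 3] tuple_row_affine[of y 2] tuple_row_affine[of y 1]
        tuple_row_affine[of y 0] det4_affine_row)
      (simp_all add: G4_def H4_def det4_def det3_def tuple_row_slope_def tuple_row_offset_def
        algebra_simps)
  have "{y \<in> ?P. bad_tuple p y} \<subseteq> zeros 11 G1 H1 \<union> zeros 10 G2 H2 \<union> zeros 9 G3 H3 \<union> zeros 7 G4 H4"
  proof
    fix y assume y: "y \<in> {y \<in> ?P. bad_tuple p y}"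
    then have "y i < p" if "i < 12" for i using that by (auto simp: PiE_iff)
    then have "\<not> int p dvd int (y 0) - int (y 4)" "\<not> int p dvd G4 y"
      using y eq_of_dvd_diff_less[of "y 0" p "y 4"] eq_of_dvd_diff_less[of "y 1" p "y 2"]
      by (auto simp: bad_tuple_def G4_def)
    then show "y \<in> zeros 11 G1 H1 \<union> zeros 10 G2 H2 \<union> zeros 9 G3 H3 \<union> zeros 7 G4 H4"
      using y \<open>prime p\<close> by (auto simp: zeros_def bad_tuple_def expand prime_dvd_mult_iff)
  qed
  then have "card {y \<in> ?P. bad_tuple p y}
      \<le> card (zeros 11 G1 H1 \<union> zeros 10 G2 H2 \<union> zeros 9 G3 H3 \<union> zeros 7 G4 H4)"
    by (rule card_mono[rotated]) (simp add: zeros_def finite_PiE)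
  also have "\<dots> \<le> card (zeros 11 G1 H1) + card (zeros 10 G2 H2) + card (zeros 9 G3 H3)
      + card (zeros 7 G4 H4)"
    by (intro order_trans[OF card_Un_le] add_right_mono card_Un_le)
  also have "\<dots> \<le> p ^ 11 + p ^ 11 + p ^ 11 + p ^ 11"
    unfolding zeros_def using \<open>prime p\<close>
    by (intro add_mono card_affine_zeros_le[where I = "{0..<12}", simplified])
      (simp_all add: G1_def H1_def G2_def H2_def G3_def H3_def G4_def H4_def tuple_row_def
        tuple_row_slope_def tuple_row_offset_def cong: if_cong)
  finally show ?thesis by simp
qed

section \<open>Sets without bad tuples have large complexity\<close>

lemma not_bad_tuple_free_of_complete_bipartite:
  fixes ends :: "nat \<Rightarrow> (nat \<times> nat) \<times> (nat \<times> nat)" and v :: "nat \<Rightarrow> nat \<times> nat"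
  assumes "prime p" "L \<subseteq> {0..<p} \<times> {0..<p}"
    and ends: "\<And>x. x \<in> T \<Longrightarrow> fst (ends x) \<in> L \<and> snd (ends x) \<in> L \<and> fst (ends x) \<noteq> snd (ends x)
      \<and> line_value p (fst (ends x)) x = line_value p (snd (ends x)) x"
    and "distinct [a, b, c]" "inj_on v {0..<4}"
    and edge: "\<And>j q. j < 4 \<Longrightarrow> q < 3 \<Longrightarrow> (v j, [a, b, c] ! q) \<in> ends ` T \<union> prod.swap ` ends ` T"
  shows "\<not> bad_tuple_free p T"
proof -
  define line where "line q = [a, b, c] ! q" for q
  define pt where "pt j q = (SOME x. x \<in> T \<and> (ends x = (v j, line q) \<or> ends x = (line q, v j)))"
    for j q
  have pt: "pt j q \<in> T \<and> (ends (pt j q) = (v j, line q) \<or> ends (pt j q) = (line q, v j))"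
    if "j < 4" "q < 3" for j q
    unfolding pt_def by (rule someI_ex) (use edge[OF that] in \<open>auto simp: line_def\<close>)
  have v_not_line: "v j \<noteq> line q" if "j < 4" "q < 3" for j q
    using pt[OF that] ends by fastforce
  have pt_inj: "j = j' \<and> q = q'"
    if "pt j q = pt j' q'" "j < 4" "q < 3" "j' < 4" "q' < 3" for j q j' q'
  proof -
    have "v j = v j' \<and> line q = line q'"
      using pt[OF that(2,3)] pt[OF that(4,5)] that(1)
        v_not_line[OF that(2,5)] v_not_line[OF that(4,3)]
      by auto
    then show ?thesis
      using that(2-5) \<open>inj_on v {0..<4}\<close> \<open>distinct [a, b, c]\<close>
      by (auto simp: inj_on_def line_def nth_eq_iff_index_eq)
  qed
  have meet: "line_value p (line q) (pt j q) = line_value p (v j) (pt j q)"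
    and line_in_L: "line q \<in> L" if "j < 4" "q < 3" for j q
    using pt[OF that] ends by fastforce+
  have "a \<in> {0..<p} \<times> {0..<p}" "c \<in> {0..<p} \<times> {0..<p}" "a \<noteq> c"
    using line_in_L[of 0 0] line_in_L[of 0 2] assms(2) \<open>distinct [a, b, c]\<close> by (auto simp: line_def)
  then have "inj_on (\<lambda>i. pt (i mod 4) (i div 4)) {0..<12}
      \<and> bad_tuple p (\<lambda>i. pt (i mod 4) (i div 4))"
    by (rule bad_tuple_of_meeting_points[OF \<open>prime p\<close> _ _ _ pt_inj meet[unfolded line_def]])
  moreover have "(\<lambda>i. pt (i mod 4) (i div 4)) ` {0..<12} \<subseteq> T" using pt by auto
  ultimately show ?thesis by (auto simp: bad_tuple_free_def)
qed

lemma few_common_neighbours_of_bad_tuple_free: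
  fixes ends :: "nat \<Rightarrow> (nat \<times> nat) \<times> (nat \<times> nat)"
  assumes "prime p" "L \<subseteq> {0..<p} \<times> {0..<p}"
    and ends: "\<And>x. x \<in> T \<Longrightarrow> fst (ends x) \<in> L \<and> snd (ends x) \<in> L \<and> fst (ends x) \<noteq> snd (ends x)
      \<and> line_value p (fst (ends x)) x = line_value p (snd (ends x)) x"
    and "bad_tuple_free p T"
    and "A \<subseteq> L" "card A = 3"
  shows "card {v \<in> L. {v} \<times> A \<subseteq> ends ` T \<union> prod.swap ` ends ` T} \<le> 3"
proof (rule ccontr)
  let ?R = "ends ` T \<union> prod.swap ` ends ` T"
  assume "\<not> ?thesis"
  moreover have "finite L" using assms(2) finite_subset by blast
  ultimately obtain v :: "nat \<Rightarrow> nat \<times> nat"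
    where v: "v ` {0..<4} \<subseteq> {v \<in> L. {v} \<times> A \<subseteq> ?R}" and "inj_on v {0..<4}"
    using card_le_inj[of "{0..<4::nat}" "{v \<in> L. {v} \<times> A \<subseteq> ?R}"] by force
  obtain a b c where A: "A = {a, b, c}" and "distinct [a, b, c]"
    using \<open>card A = 3\<close> by (auto simp: card_3_iff)
  have "(v j, [a, b, c] ! q) \<in> ?R" if "j < 4" "q < 3" for j q
  proof -
    have "[a, b, c] ! q \<in> A" using nth_mem[of q "[a, b, c]"] \<open>q < 3\<close> A by simp
    moreover have "{v j} \<times> A \<subseteq> ?R" using v \<open>j < 4\<close> unfolding image_subset_iff by simp
    ultimately show ?thesis by blast
  qed
  then show False
    using not_bad_tuple_free_of_complete_bipartite[OF assms(1-3) \<open>distinct [a, b, c]\<close>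
        \<open>inj_on v {0..<4}\<close>] \<open>bad_tuple_free p T\<close>
    by blast
qed

lemma card_cube_less_of_bad_tuple_free:
  assumes "prime p" "L \<subseteq> {0..<p} \<times> {0..<p}" "T \<subseteq> I_lines p L" "T \<noteq> {}"
    and "bad_tuple_free p T"
  shows "real (card T) ^ 3 < 4 * real (card L) ^ 5"
proof -
  obtain ends where ends: "\<And>x. x \<in> T \<Longrightarrow> fst (ends x) \<in> L \<and> snd (ends x) \<in> L
      \<and> fst (ends x) \<noteq> snd (ends x) \<and> line_value p (fst (ends x)) x = line_value p (snd (ends x)) x"
    using obtain_meeting_pairs[OF assms(3)] by blast
  let ?R = "ends ` T \<union> prod.swap ` ends ` T"
  have same_point: "x = x'"
    if "x \<in> T" "x' \<in> T" "ends x' = ends x \<or> ends x' = prod.swap (ends x)" for x x'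
  proof -
    have "x < p" "x' < p" using that(1,2) assms(3) by (auto simp: mem_I_lines_iff)
    moreover have "line_value p (fst (ends x)) x' = line_value p (snd (ends x)) x'"
      using ends[OF that(2)] that(3) by auto
    ultimately show ?thesis
      using lines_meet_at_most_once[OF \<open>prime p\<close>, of "fst (ends x)" "snd (ends x)"]
        ends[OF that(1)] assms(2) by blast
  qed
  have "finite T" using assms(3) by (intro finite_subset[of T "{0..<p}"]) (auto simp: I_lines_def)
  then have "card ?R = 2 * card T" using ends same_point by (intro card_image_Un_swap_image) auto
  moreover have "real (card ?R) ^ 3 < 32 * real (card L) ^ 5"
  proof (rule card_cube_less_of_few_common_neighbours)
    show "finite L" using assms(2) finite_subset by blast
    have "ends x \<in> L \<times> L" "prod.swap (ends x) \<in> L \<times> L" if "x \<in> T" for x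
      using ends[OF that] by (simp_all add: mem_Times_iff)
    then show "?R \<subseteq> L \<times> L" by blast
    obtain x where "x \<in> T" using \<open>T \<noteq> {}\<close> by blast
    then have "card {fst (ends x), snd (ends x)} \<le> card L"
      using ends[OF \<open>x \<in> T\<close>] \<open>finite L\<close> by (intro card_mono) auto
    then show "2 \<le> card L" using ends[OF \<open>x \<in> T\<close>] by simp
  qed (rule few_common_neighbours_of_bad_tuple_free[OF assms(1,2) ends assms(5)])
  ultimately show ?thesis by (simp add: power_mult_distrib)
qed

lemma gen_complexity_witness:
  assumes "1 < p" "S \<subseteq> {0..<p}" "\<alpha> \<le> 1"
  obtains L where "L \<subseteq> {0..<p} \<times> {0..<p}" "card L = gen_complexity p \<alpha> S"
    "\<alpha> * real (card S) \<le> real (card (S \<inter> I_lines p L))"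
proof -
  let ?Q = "\<lambda>n. \<exists>L. L \<subseteq> {0..<p} \<times> {0..<p} \<and> card L = n
    \<and> real (card (S \<inter> I_lines p L)) \<ge> \<alpha> * real (card S)"
  have "S \<inter> I_lines p ({0..<p} \<times> {0..<p}) = S" using assms(1,2) I_lines_grid by auto
  then have "?Q (card ({0..<p} \<times> {0..<p}))"
    using mult_right_mono[OF assms(3), of "real (card S)"] by auto
  then have "?Q (gen_complexity p \<alpha> S)" unfolding gen_complexity_def by (rule LeastI)
  then show thesis using that by blast
qed

lemma powr_three_fifths_less:
  fixes s m n :: real
  assumes "0 < s" "s \<le> m" "m ^ 3 < 4 * n ^ 5" "0 \<le> n"
  shows "(s / root 3 4) powr (3/5) < n"
proof -
  define X where "X = s / root 3 4"
  have "X > 0" using assms(1) by (simp add: X_def)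
  have "X ^ 3 = s ^ 3 / 4" by (simp add: X_def power_divide)
  also have "\<dots> \<le> m ^ 3 / 4" using assms(1,2) by (intro divide_right_mono power_mono) auto
  also have "\<dots> < n ^ 5" using assms(3) by simp
  finally have X3: "X ^ 3 < n ^ 5" .
  have "n > 0"
  proof (rule ccontr)
    assume "\<not> n > 0"
    then have "n = 0" using assms(4) by simp
    then show False using X3 \<open>X > 0\<close> by simp
  qed
  have "X powr (3/5) = (X powr 3) powr (1/5)" by (simp add: powr_powr)
  also have "\<dots> = (X ^ 3) powr (1/5)" using \<open>X > 0\<close> by (simp add: powr_numeral)
  also have "\<dots> < (n ^ 5) powr (1/5)" using X3 \<open>X > 0\<close> by (intro powr_less_mono2) auto
  also have "(n ^ 5) powr (1/5) = n"
  proof -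
    have "n ^ 5 = n powr 5" using \<open>n > 0\<close> by (simp add: powr_numeral)
    then show ?thesis using \<open>n > 0\<close> powr_powr[of n 5 "1/5"] by simp
  qed
  finally show ?thesis by (simp add: X_def)
qed

lemma gen_complexity_gt_of_bad_tuple_free:
  assumes "prime p" "S \<subseteq> {0..<p}" "S \<noteq> {}" "0 < \<alpha>" "\<alpha> \<le> 1" "bad_tuple_free p S"
  shows "(\<alpha> * real (card S) / root 3 4) powr (3/5) < real (gen_complexity p \<alpha> S)"
proof -
  obtain L where L: "L \<subseteq> {0..<p} \<times> {0..<p}" "card L = gen_complexity p \<alpha> S"
    and T: "\<alpha> * real (card S) \<le> real (card (S \<inter> I_lines p L))"
    by (rule gen_complexity_witness[OF prime_gt_1_nat[OF assms(1)] assms(2,5)])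
  have "finite S" using assms(2) finite_subset by blast
  then have pos: "0 < \<alpha> * real (card S)" using assms(3,4) by (simp add: card_gt_0_iff)
  then have "S \<inter> I_lines p L \<noteq> {}" using T by auto
  moreover have "bad_tuple_free p (S \<inter> I_lines p L)"
    using assms(6) by (auto simp: bad_tuple_free_def)
  ultimately have "real (card (S \<inter> I_lines p L)) ^ 3 < 4 * real (card L) ^ 5"
    by (intro card_cube_less_of_bad_tuple_free[OF assms(1) L(1)]) auto
  from powr_three_fifths_less[OF pos T this] show ?thesis by (simp add: L(2))
qed

section \<open>Random sets have no bad tuples with high probability\<close>

lemma kwise_uniform_less:
  assumes "kwise_uniform p N k D" "\<omega> \<in> set_pmf D" "i < N" "p > 0"
  shows "\<omega> i < p"
proof -
  have "\<omega> i \<in> set_pmf (map_pmf (\<lambda>\<omega>. \<omega> i) D)" using assms(2) by simp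
  also have "map_pmf (\<lambda>\<omega>. \<omega> i) D = pmf_of_set {0..<p}"
    using assms(1,3) by (simp add: kwise_uniform_def)
  finally show ?thesis using assms(4) by simp
qed

lemma kwise_uniform_prob_coordinate_eq_le:
  assumes "kwise_uniform p N k D" "i < N" "p > 0"
  shows "measure_pmf.prob D {\<omega>. \<omega> i = c} \<le> 1 / real p"
proof -
  have "measure_pmf.prob D {\<omega>. \<omega> i = c} = measure_pmf.prob (map_pmf (\<lambda>\<omega>. \<omega> i) D) {c}"
    by (simp add: vimage_def)
  also have "\<dots> = pmf (pmf_of_set {0..<p}) c"
    using assms(1,2) by (simp add: kwise_uniform_def measure_pmf_single)
  also have "\<dots> \<le> 1 / real p" using assms(3) by (simp add: indicator_def)
  finally show ?thesis .
qed

lemma kwise_uniform_pmf_index_tuple_le: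
  assumes "kwise_uniform p N k D" "0 < m" "m \<le> k" "p > 0"
    and "\<kappa> ` {0..<m} \<subseteq> {0..<N}" "inj_on \<kappa> {0..<m}"
  shows "pmf (map_pmf (\<lambda>\<omega>. restrict (\<omega> \<circ> \<kappa>) {0..<m}) D) y \<le> 1 / real p ^ m"
proof -
  let ?J = "\<kappa> ` {0..<m}"
  let ?A = "\<lambda>j. {y (the_inv_into {0..<m} \<kappa> j)}"
  let ?event = "\<lambda>j. (\<lambda>\<omega>. \<omega> j) -` ?A j \<inter> space (measure_pmf D)"
  have "card ?J \<le> k" using assms(3,6) by (simp add: card_image)
  then have indep: "prob_space.indep_vars (measure_pmf D) (\<lambda>_. count_space UNIV) (\<lambda>i \<omega>. \<omega> i) ?J"
    using assms(1,5) by (simp add: kwise_uniform_def)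
  have "pmf (map_pmf (\<lambda>\<omega>. restrict (\<omega> \<circ> \<kappa>) {0..<m}) D) y
      = measure_pmf.prob D ((\<lambda>\<omega>. restrict (\<omega> \<circ> \<kappa>) {0..<m}) -` {y})"
    by (simp add: pmf_map)
  also have "\<dots> \<le> measure_pmf.prob D (\<Inter>j\<in>?J. ?event j)"
    using assms(6)
    by (intro measure_pmf.finite_measure_mono)
      (auto simp: the_inv_into_f_f restrict_def fun_eq_iff split: if_splits)
  also have "\<dots> = (\<Prod>j\<in>?J. measure_pmf.prob D (?event j))"
    using assms(2)
    by (intro prob_space.indep_varsD_finite[OF measure_pmf.prob_space_axioms indep]) auto
  also have "\<dots> \<le> (\<Prod>j\<in>?J. 1 / real p)"
    using kwise_uniform_prob_coordinate_eq_le[OF assms(1) _ assms(4)] assms(5)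
    by (intro prod_mono) (auto simp: vimage_def)
  also have "\<dots> = 1 / real p ^ m"
    using assms(6) by (simp add: card_image power_one_over)
  finally show ?thesis .
qed

lemma kwise_uniform_prob_index_tuple_in_le:
  assumes "kwise_uniform p N k D" "0 < m" "m \<le> k" "p > 0"
    and "\<kappa> ` {0..<m} \<subseteq> {0..<N}" "inj_on \<kappa> {0..<m}"
  shows "measure_pmf.prob D {\<omega>. restrict (\<omega> \<circ> \<kappa>) {0..<m} \<in> B}
    \<le> real (card (B \<inter> PiE {0..<m} (\<lambda>_. {0..<p}))) / real p ^ m"
proof -
  let ?Q = "map_pmf (\<lambda>\<omega>. restrict (\<omega> \<circ> \<kappa>) {0..<m}) D"
  let ?B = "B \<inter> PiE {0..<m} (\<lambda>_. {0..<p})"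
  have "set_pmf ?Q \<subseteq> PiE {0..<m} (\<lambda>_. {0..<p})"
    using kwise_uniform_less[OF assms(1) _ _ assms(4)] assms(5) by auto
  then have "measure_pmf.prob D {\<omega>. restrict (\<omega> \<circ> \<kappa>) {0..<m} \<in> B} \<le> measure_pmf.prob ?Q ?B"
    by (subst measure_Int_set_pmf[symmetric]) (auto intro!: measure_pmf.finite_measure_mono)
  also have "\<dots> = (\<Sum>y\<in>?B. pmf ?Q y)"
    by (rule measure_measure_pmf_finite) (simp add: finite_PiE)
  also have "\<dots> \<le> (\<Sum>y\<in>?B. 1 / real p ^ m)"
    by (intro sum_mono kwise_uniform_pmf_index_tuple_le[OF assms])
  finally show ?thesis by simp
qed

lemma obtain_index_tuple:
  assumes "inj_on y I" "y ` I \<subseteq> \<omega> ` J"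
  obtains \<kappa> where "\<kappa> \<in> PiE I (\<lambda>_. J)" "inj_on \<kappa> I" "\<And>i. i \<in> I \<Longrightarrow> \<omega> (\<kappa> i) = y i"
proof
  let ?\<kappa> = "restrict (\<lambda>i. inv_into J \<omega> (y i)) I"
  show \<omega>\<kappa>: "\<omega> (?\<kappa> i) = y i" if "i \<in> I" for i
    using assms(2) that by (simp add: f_inv_into_f image_subset_iff)
  show "?\<kappa> \<in> PiE I (\<lambda>_. J)" using assms(2) by (auto simp: image_subset_iff intro!: inv_into_into)
  show "inj_on ?\<kappa> I"
  proof (rule inj_onI)
    fix i i' assume "i \<in> I" "i' \<in> I" "?\<kappa> i = ?\<kappa> i'"
    then have "y i = y i'" using \<omega>\<kappa> by metis
    then show "i = i'" using inj_onD[OF assms(1)] \<open>i \<in> I\<close> \<open>i' \<in> I\<close> by blast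
  qed
qed

lemma kwise_uniform_prob_bad_index_tuple_le:
  assumes "kwise_uniform p N 12 D" "prime p" "\<kappa> ` {0..<12} \<subseteq> {0..<N}" "inj_on \<kappa> {0..<12}"
  shows "measure_pmf.prob D {\<omega>. bad_tuple p (restrict (\<omega> \<circ> \<kappa>) {0..<12})} \<le> 4 / real p"
proof -
  have "p > 0" using assms(2) prime_gt_0_nat by blast
  have "card ({y. bad_tuple p y} \<inter> PiE {0..<12} (\<lambda>_. {0..<p})) \<le> 4 * p ^ 11"
    using card_bad_tuples_le[OF assms(2)] by (simp add: Int_def conj_commute)
  then have "real (card ({y. bad_tuple p y} \<inter> PiE {0..<12} (\<lambda>_. {0..<p}))) / real p ^ 12
      \<le> real (4 * p ^ 11) / real p ^ 12"
    by (intro divide_right_mono) (simp_all only: of_nat_le_iff zero_le_power of_nat_0_le_iff)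
  also have "\<dots> = 4 / real p"
    using \<open>p > 0\<close> power_add[of "real p" 11 1] by simp
  finally show ?thesis
    using kwise_uniform_prob_index_tuple_in_le[OF assms(1) _ _ \<open>p > 0\<close> assms(3,4),
        of "{y. bad_tuple p y}"]
    by simp
qed

lemma prob_not_bad_tuple_free_le:
  assumes "kwise_uniform p N 12 D" "prime p"
  shows "measure_pmf.prob D {\<omega>. \<not> bad_tuple_free p (\<omega> ` {0..<N})} \<le> 4 * real N ^ 12 / real p"
proof -
  define K where "K = {\<kappa> \<in> PiE {0..<12::nat} (\<lambda>_. {0..<N}). inj_on \<kappa> {0..<12}}"
  define E where "E \<kappa> = {\<omega>. bad_tuple p (restrict (\<omega> \<circ> \<kappa>) {0..<12})}" for \<kappa> :: "nat \<Rightarrow> nat"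
  have "{\<omega>. \<not> bad_tuple_free p (\<omega> ` {0..<N})} \<subseteq> (\<Union>\<kappa>\<in>K. E \<kappa>)"
  proof
    fix \<omega> assume "\<omega> \<in> {\<omega>. \<not> bad_tuple_free p (\<omega> ` {0..<N})}"
    then obtain y where y: "inj_on y {0..<12}" "y ` {0..<12} \<subseteq> \<omega> ` {0..<N}" "bad_tuple p y"
      by (auto simp: bad_tuple_free_def)
    obtain \<kappa> where "\<kappa> \<in> PiE {0..<12} (\<lambda>_. {0..<N})" "inj_on \<kappa> {0..<12}"
      and \<omega>\<kappa>: "\<And>i. i \<in> {0..<12} \<Longrightarrow> \<omega> (\<kappa> i) = y i"
      using obtain_index_tuple[OF y(1,2)] by blast
    then have "\<kappa> \<in> K" by (simp add: K_def)
    moreover have "bad_tuple p (restrict (\<omega> \<circ> \<kappa>) {0..<12})"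
      using y(3) \<omega>\<kappa> bad_tuple_cong[of "restrict (\<omega> \<circ> \<kappa>) {0..<12}" y p] by simp
    ultimately show "\<omega> \<in> (\<Union>\<kappa>\<in>K. E \<kappa>)" unfolding E_def by blast
  qed
  then have "measure_pmf.prob D {\<omega>. \<not> bad_tuple_free p (\<omega> ` {0..<N})}
      \<le> measure_pmf.prob D (\<Union>\<kappa>\<in>K. E \<kappa>)"
    by (rule measure_pmf.finite_measure_mono) simp
  also have "\<dots> \<le> (\<Sum>\<kappa>\<in>K. measure_pmf.prob D (E \<kappa>))"
    by (rule measure_pmf.finite_measure_subadditive_finite) (auto simp: K_def finite_PiE)
  also have "\<dots> \<le> (\<Sum>\<kappa>\<in>K. 4 / real p)"
    unfolding E_def
    by (intro sum_mono kwise_uniform_prob_bad_index_tuple_le[OF assms]) (auto simp: K_def PiE_iff)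
  also have "\<dots> \<le> real N ^ 12 * (4 / real p)"
  proof -
    have "card K \<le> card (PiE {0..<12::nat} (\<lambda>_. {0..<N}))"
      unfolding K_def by (rule card_mono) (auto simp: finite_PiE)
    then have "real (card K) \<le> real N ^ 12" by (simp add: card_PiE flip: of_nat_power)
    then show ?thesis by (simp add: divide_right_mono)
  qed
  finally show ?thesis by (simp add: mult_ac)
qed

lemma power_12_div_eq_powr:
  fixes \<epsilon> :: real
  assumes "p > 0" "real N = real p powr (1/12 - \<epsilon>)"
  shows "real N ^ 12 / real p = real p powr (-12 * \<epsilon>)"
proof -
  have "real N ^ 12 = real p powr (real 12 * (1/12 - \<epsilon>))"
    using assms by (simp add: powr_power)
  also have "real 12 * (1/12 - \<epsilon>) = 1 + (-12 * \<epsilon>)" by simp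
  also have "real p powr (1 + (-12 * \<epsilon>)) = real p * real p powr (-12 * \<epsilon>)"
    using assms(1) powr_add[of "real p" 1 "-12 * \<epsilon>"] by simp
  finally show ?thesis using assms(1) by simp
qed

theorem theorem9:
  fixes p N :: nat and \<epsilon> \<alpha> :: real and D :: "(nat \<Rightarrow> nat) pmf"
  assumes "prime p" and "\<epsilon> > 0" and "0 < \<alpha>" and "\<alpha> \<le> 1"
    and "N > 0" and "real N = real p powr (1/12 - \<epsilon>)"
    and "kwise_uniform p N 12 D"
  shows "measure_pmf.prob D
           {\<omega>. real (gen_complexity p \<alpha> (\<omega> ` {0..<N}))
                 > (\<alpha> * real (card (\<omega> ` {0..<N})) / root 3 4) powr (3/5)}
         \<ge> 1 - 6 * real p powr (-12 * \<epsilon>)"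
proof -
  let ?good = "{\<omega>. bad_tuple_free p (\<omega> ` {0..<N})}"
  let ?target = "{\<omega>. real (gen_complexity p \<alpha> (\<omega> ` {0..<N}))
    > (\<alpha> * real (card (\<omega> ` {0..<N})) / root 3 4) powr (3/5)}"
  have "p > 0" using assms(1) prime_gt_0_nat by blast
  have "set_pmf D \<inter> ?good \<subseteq> ?target"
  proof
    fix \<omega> assume \<omega>: "\<omega> \<in> set_pmf D \<inter> ?good"
    then have "\<omega> ` {0..<N} \<subseteq> {0..<p}" using kwise_uniform_less[OF assms(7) _ _ \<open>p > 0\<close>] by auto
    then show "\<omega> \<in> ?target"
      using gen_complexity_gt_of_bad_tuple_free[OF assms(1) _ _ assms(3,4)] \<omega> assms(5) by auto
  qed
  then have "measure_pmf.prob D ?good \<le> measure_pmf.prob D ?target"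
    by (subst measure_Int_set_pmf[symmetric]) (auto intro!: measure_pmf.finite_measure_mono)
  moreover have "measure_pmf.prob D (- ?good) = 1 - measure_pmf.prob D ?good"
    using measure_pmf.prob_compl[of ?good D] by (simp add: Compl_eq_Diff_UNIV)
  moreover have "real N ^ 12 / real p = real p powr (-12 * \<epsilon>)"
    using \<open>p > 0\<close> assms(6) by (rule power_12_div_eq_powr)
  moreover have "measure_pmf.prob D (- ?good) \<le> 4 * real N ^ 12 / real p"
    using prob_not_bad_tuple_free_le[OF assms(7,1)] by (simp add: Collect_neg_eq)
  ultimately show ?thesis using powr_ge_zero[of "real p" "-12 * \<epsilon>"] by linarith
qed

end
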